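(* Let $\mathsf{F}$ be a fixed plane forest with $m\ge 0$ vertices. Choose a plane tree with $k$ vertices uniformly at random. Let $\rho_k(\mathsf{F})$ be the number of non-root vertices $v$ with $F(v)$ isomorphic to $\mathsf{F}$, divided by $k$. Then $\rho_k(\mathsf{F})$ is concentrated (as $k\to\infty$) at $$\mu_\rho(\mathsf{F})=\frac{1}{2^{2m+1}}.$$
   Context: A plane tree is a rooted tree in which the children of each vertex are linearly ordered (left to right). A plane forest is a finite (possibly empty) sequence of plane trees; isomorphism of plane forests preserves the order of components and of children. For a non-root vertex $v$ of a plane tree, $F(v)$ denotes the plane forest whose components are the subtrees rooted at those siblings of $v$ that precede $v$ in the left-to-right order of the children of the parent of $v$, listed in that order. A sequence of random variables $(\xi_k)$ is concentrated at a constant $\mu$ if for every $\varepsilon>0$ there is $K$ such that $\mathbb{P}[|\xi_k-\mu|\le\varepsilon]>1-\varepsilon$ for all $k\ge K$. *)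

theory Defs
  imports Complex_Main
begin

text \<open>Two plane trees are isomorphic iff they are equal as values of this datatype.
A plane forest is a list of plane trees (isomorphism = equality of lists).\<close>

datatype ptree = Node "ptree list"

type_synonym pforest = "ptree list"

fun children :: "ptree \<Rightarrow> ptree list" where
  "children (Node cs) = cs"

fun nverts :: "ptree \<Rightarrow> nat" where
  "nverts (Node cs) = Suc (sum_list (map nverts cs))"

definition forest_verts :: "pforest \<Rightarrow> nat" where
  "forest_verts F = sum_list (map nverts F)"

text \<open>Number of non-root vertices v of a tree with F(v) isomorphic to the forest F:
every non-root vertex is the i-th child (0-based) of some vertex u, and F(v) is the
forest of the subtrees of the first i children of u.\<close>
fun count_prefix :: "pforest \<Rightarrow> ptree \<Rightarrow> nat" where
  "count_prefix F (Node cs) =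
     length (filter (\<lambda>i. take i cs = F) [0..<length cs]) + sum_list (map (count_prefix F) cs)"

definition trees_of_size :: "nat \<Rightarrow> ptree set" where
  "trees_of_size k = {t. nverts t = k}"

definition uniform_prob :: "'a set \<Rightarrow> ('a \<Rightarrow> bool) \<Rightarrow> real" where
  "uniform_prob A P = real (card {x \<in> A. P x}) / real (card A)"

definition concentrated :: "(nat \<Rightarrow> 'a set) \<Rightarrow> (nat \<Rightarrow> 'a \<Rightarrow> real) \<Rightarrow> real \<Rightarrow> bool" where
  "concentrated \<Omega> X \<mu> \<longleftrightarrow>
     (\<forall>\<epsilon>>0. \<exists>K. \<forall>k\<ge>K. uniform_prob (\<Omega> k) (\<lambda>t. \<bar>X k t - \<mu>\<bar> \<le> \<epsilon>) > 1 - \<epsilon>)"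

definition rho :: "pforest \<Rightarrow> nat \<Rightarrow> ptree \<Rightarrow> real" where
  "rho F k t = real (count_prefix F t) / real k"

end

theory Submission
  imports Defs "HOL-Real_Asymp.Real_Asymp"
begin

(*
  A plane tree t with k vertices is encoded by its Dyck word (True = moving to a
  child, an up-step of the walk; False = returning to the parent, a down-step) followed
  by one extra False; this "tree walk" of length
  2k-1 has n = k-1 up-steps, ends at height -1 and stays nonnegative before its last
  step.  A vertex v with F(v) = F corresponds (up to a correction of at most 1 for the
  children of the root) to an occurrence of the pattern True # dyck(F) @ [True] in the
  tree walk, and such occurrences may as well be counted cyclically.  By the cycle lemma
  every walk of length 2n+1 with n up-steps has exactly one rotation that is a tree walk,
  and cyclic pattern counts are rotation invariant; hence averaging over trees is the
  same as averaging over all such words, where first and second moments are binomial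
  coefficient counts.  Their asymptotics give mean ~ 2/2^L and second moment ~ (2/2^L)^2
  for a pattern of length L, so Chebyshev's inequality yields concentration.
*)

section \<open>Dyck encoding of plane trees\<close>

fun dyck :: "ptree \<Rightarrow> bool list" where
  "dyck (Node cs) = concat (map (\<lambda>c. True # dyck c @ [False]) cs)"

definition dyck_forest :: "ptree list \<Rightarrow> bool list" where
  "dyck_forest cs = concat (map (\<lambda>c. True # dyck c @ [False]) cs)"

lemma dyck_Node: "dyck (Node cs) = dyck_forest cs" by (simp add: dyck_forest_def)

lemma dyck_forest_Nil[simp]: "dyck_forest [] = []" by (simp add: dyck_forest_def)

lemma dyck_forest_Cons[simp]: "dyck_forest (c # cs) = True # dyck c @ False # dyck_forest cs"
  by (simp add: dyck_forest_def)

lemma dyck_forest_append[simp]: "dyck_forest (xs @ ys) = dyck_forest xs @ dyck_forest ys"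
  by (simp add: dyck_forest_def)
declare dyck.simps[simp del]

definition height :: "bool list \<Rightarrow> int" where
  "height w = 2 * int (length (filter id w)) - int (length w)"

lemma height_Nil[simp]: "height [] = 0" by (simp add: height_def)

lemma height_append[simp]: "height (a @ b) = height a + height b" by (simp add: height_def)

lemma height_Cons[simp]: "height (x # a) = (if x then 1 else -1) + height a" by (simp add: height_def)

definition balanced :: "bool list \<Rightarrow> bool" where
  "balanced w \<longleftrightarrow> (\<forall>i. 0 \<le> height (take i w)) \<and> height w = 0"

lemma balanced_Nil[simp]: "balanced []" by (simp add: balanced_def)

lemma balanced_append: "balanced a \<Longrightarrow> balanced b \<Longrightarrow> balanced (a @ b)"
  unfolding balanced_def by (simp add: take_append add_nonneg_nonneg)

lemma balanced_wrap: assumes "balanced a" shows "balanced (True # a @ [False])"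
  unfolding balanced_def
proof (intro conjI allI)
  fix i show "0 \<le> height (take i (True # a @ [False]))"
  proof (cases i)
    case (Suc j)
    have "0 \<le> height (take j a)" using assms by (simp add: balanced_def)
    moreover have "height (take (j - length a) [False]) \<ge> -1"
      by (cases "j - length a") auto
    ultimately show ?thesis using Suc by (simp add: take_append)
  qed simp
qed (use assms in \<open>simp add: balanced_def\<close>)

lemma balanced_dyck_forest_of_children:
  "(\<forall>c\<in>set cs. balanced (dyck c)) \<Longrightarrow> balanced (dyck_forest cs)"
proof (induction cs)
  case (Cons c cs)
  have "balanced ((True # dyck c @ [False]) @ dyck_forest cs)" using Cons by (intro balanced_append balanced_wrap) auto
  thus ?case by simp
qed simp

lemma balanced_dyck: "balanced (dyck t)"
proof (induction t)
  case (Node cs)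
  thus ?case by (simp add: dyck_Node balanced_dyck_forest_of_children)
qed

text \<open>A balanced prefix followed by a down-step marks the first time the walk reaches -1;
  hence a balanced word is determined by the position of that step.\<close>
lemma balanced_then_down:
  assumes "balanced u" shows "height (take (Suc (length u)) (u @ False # v)) = -1"
  using assms by (simp add: balanced_def take_append)

lemma balanced_prefix_unique:
  assumes "balanced u" "balanced u'" "u @ False # v = u' @ False # v'"
  shows "u = u'"
proof -
  have *: "False" if "balanced u" "balanced u'" "u @ False # v = u' @ False # v'" "length u < length u'"
    for u u' v v'
  proof -
    have h1: "height (take (Suc (length u)) (u @ False # v)) = -1" using balanced_then_down that(1) .
    have "take (Suc (length u)) (u @ False # v) = take (Suc (length u)) (u' @ False # v')"
      using that(3) by simp
    also have "\<dots> = take (Suc (length u)) u'" using that(4) by (simp add: take_append)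
    finally have "height (take (Suc (length u)) u') = -1" using h1 by simp
    moreover have "0 \<le> height (take (Suc (length u)) u')" using that(2) unfolding balanced_def by blast
    ultimately show False by simp
  qed
  have "length u = length u'"
    using *[OF assms] *[OF assms(2,1) assms(3)[symmetric]] by (meson linorder_neqE_nat)
  thus ?thesis using assms(3) by (metis append_eq_append_conv)
qed

lemma balanced_prefix_unique_take:
  assumes "balanced u" "balanced u'" "take n (u @ False # v) = u' @ False # v'"
  shows "u = u'"
proof -
  have "u @ False # v = take n (u @ False # v) @ drop n (u @ False # v)" by (rule append_take_drop_id[symmetric])
  also have "\<dots> = u' @ False # (v' @ drop n (u @ False # v))" using assms(3) by simp
  finally show ?thesis using balanced_prefix_unique[OF assms(1,2)] by blast
qed

lemma dyck_inj: "dyck t = dyck t' \<Longrightarrow> t = t'"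
proof (induction t arbitrary: t')
  case (Node cs)
  obtain cs' where t': "t' = Node cs'" by (cases t')
  have "dyck_forest cs = dyck_forest cs' \<Longrightarrow> cs = cs'" using Node.IH
  proof (induction cs arbitrary: cs')
    case Nil thus ?case by (cases cs') auto
  next
    case (Cons c cs)
    then obtain c' cs'' where cs': "cs' = c' # cs''" by (cases cs') auto
    have "dyck c = dyck c'"
      using Cons.prems(1) balanced_prefix_unique[OF balanced_dyck balanced_dyck] by (simp add: cs')
    hence "c = c'" using Cons.prems(2) by auto
    moreover have "dyck_forest cs = dyck_forest cs''" using Cons.prems(1) \<open>dyck c = dyck c'\<close> by (simp add: cs')
    ultimately show ?case using Cons by (auto simp: cs')
  qed
  thus ?case using Node.prems t' by (simp add: dyck_Node)
qed

lemma length_dyck: "length (dyck t) + 2 = 2 * nverts t"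
proof (induction t)
  case (Node cs)
  have "length (dyck_forest cs) = 2 * sum_list (map nverts cs)" using Node
    by (induction cs) auto
  thus ?case by (simp add: dyck_Node)
qed

lemma length_dyck_forest: "length (dyck_forest cs) = 2 * sum_list (map nverts cs)"
proof (induction cs)
  case (Cons c cs) thus ?case using length_dyck[of c] by simp
qed simp

text \<open>Splitting a walk at its first visit to height -1: this is the first-return decomposition
  of Dyck words.\<close>
lemma first_descent:
  assumes ge: "\<And>i. -1 \<le> height (take i w)" and hw: "height w = -1"
  shows "\<exists>u v. w = u @ False # v \<and> balanced u \<and> balanced v"
proof -
  define i0 where "i0 = (LEAST i. height (take i w) = -1)"
  have ex: "height (take (length w) w) = -1" using hw by simp
  have i0: "height (take i0 w) = -1" unfolding i0_def by (rule LeastI, rule ex)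
  have i0le: "i0 \<le> length w" unfolding i0_def by (rule Least_le, rule ex)
  have before: "0 \<le> height (take i w)" if "i < i0" for i
  proof -
    have "height (take i w) \<noteq> -1" using not_less_Least[OF that[unfolded i0_def]] by blast
    with ge[of i] show ?thesis by linarith
  qed
  have "i0 \<noteq> 0" using i0 by (intro notI) simp
  then obtain j where j: "i0 = Suc j" by (cases i0) auto
  have tk: "take i0 w = take j w @ [w ! j]" using j i0le by (simp add: take_Suc_conv_app_nth)
  have wj: "w ! j = False" using i0 before[of j] j unfolding tk by (cases "w ! j") auto
  define u where "u = take j w"
  define v where "v = drop i0 w"
  have w: "w = u @ False # v"
  proof -
    have "w = take i0 w @ drop i0 w" by simp
    also have "\<dots> = (take j w @ [False]) @ drop i0 w" using tk wj by simp
    finally show ?thesis by (simp add: u_def v_def)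
  qed
  have "balanced u" unfolding balanced_def
  proof (intro conjI allI)
    fix i
    have "take i u = take (min i j) w" unfolding u_def by (simp add: min.commute)
    thus "0 \<le> height (take i u)" using before[of "min i j"] j by simp
    show "height u = 0" using i0 tk wj unfolding u_def by simp
  qed
  moreover have "balanced v" unfolding balanced_def
  proof (intro conjI allI)
    fix i
    have "take (i0 + i) w = take i0 w @ take i v" unfolding v_def by (simp add: take_add)
    thus "0 \<le> height (take i v)" using ge[of "i0 + i"] i0 by simp
    have "height w = height (take i0 w) + height v" unfolding v_def by (metis append_take_drop_id height_append)
    thus "height v = 0" using i0 hw by simp
  qed
  ultimately show ?thesis using w by blast
qed

lemma balanced_decompose:
  assumes "balanced w" "w \<noteq> []"
  shows "\<exists>u v. w = True # u @ False # v \<and> balanced u \<and> balanced v"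
proof -
  obtain a w' where w: "w = a # w'" using assms(2) by (cases w) auto
  have "0 \<le> height (take 1 w)" using assms(1) unfolding balanced_def by blast
  hence a: "a" using w by (cases a) auto
  have "-1 \<le> height (take i w')" for i
  proof -
    have "0 \<le> height (take (Suc i) w)" using assms(1) unfolding balanced_def by blast
    thus ?thesis using w a by simp
  qed
  moreover have "height w' = -1" using assms(1) w a by (simp add: balanced_def)
  ultimately show ?thesis using first_descent w a by blast
qed

lemma balanced_is_dyck_forest: "balanced w \<Longrightarrow> \<exists>cs. dyck_forest cs = w"
proof (induction "length w" arbitrary: w rule: less_induct)
  case less
  show ?case
  proof (cases "w = []")
    case True thus ?thesis by (intro exI[of _ "[]"]) simp
  next
    case False
    then obtain u v where uv: "w = True # u @ False # v" "balanced u" "balanced v"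
      using balanced_decompose less.prems by blast
    obtain cs1 where "dyck_forest cs1 = u" using less.hyps[of u] uv by auto
    moreover obtain cs2 where "dyck_forest cs2 = v" using less.hyps[of v] uv by auto
    ultimately have "dyck_forest (Node cs1 # cs2) = w" using uv by (simp add: dyck_Node)
    thus ?thesis by blast
  qed
qed

section \<open>Vertices with a given left-sibling forest as pattern occurrences\<close>

text \<open>A vertex v whose left siblings form the forest F is the (|F|+1)-st child of its parent
  u.  Inside the code of u (preceded by the step into u) this is an occurrence of the
  pattern below: the step into u, the code of F and the step into v.\<close>

definition forest_pattern :: "pforest \<Rightarrow> bool list" where
  "forest_pattern F = True # dyck_forest F @ [True]"

lemma length_forest_pattern: "length (forest_pattern F) = 2 * forest_verts F + 2"
  by (simp add: forest_pattern_def length_dyck_forest forest_verts_def)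

definition occ_count :: "bool list \<Rightarrow> bool list \<Rightarrow> bool list \<Rightarrow> nat" where
  "occ_count P w s = (\<Sum>j<length w. if take (length P) (drop j (w @ s)) = P then 1 else 0)"

lemma occ_count_Nil[simp]: "occ_count P [] s = 0" by (simp add: occ_count_def)

lemma sum_split_shift: "(\<Sum>j<m+n. f j) = (\<Sum>j<m. f j) + (\<Sum>j<n. f (m + j))"
  for f :: "nat \<Rightarrow> 'a::comm_monoid_add"
  by (induction n) (simp_all add: add.assoc)

lemma occ_count_append: "occ_count P (a @ b) s = occ_count P a (b @ s) + occ_count P b s"
proof -
  let ?f = "\<lambda>j. if take (length P) (drop j (a @ b @ s)) = P then 1 else (0::nat)"
  have "occ_count P (a @ b) s = (\<Sum>j<length a + length b. ?f j)" by (simp add: occ_count_def)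
  also have "\<dots> = (\<Sum>j<length a. ?f j) + (\<Sum>j<length b. ?f (length a + j))"
    by (rule sum_split_shift)
  also have "(\<Sum>j<length b. ?f (length a + j)) = occ_count P b s"
    unfolding occ_count_def by (intro sum.cong) (simp_all add: drop_append)
  finally show ?thesis by (simp add: occ_count_def)
qed

lemma dyck_forest_prefix_iff:
  "take (Suc (length (dyck_forest F))) (dyck_forest cs @ False # rest) = dyck_forest F @ [True] \<longleftrightarrow> (\<exists>x r. cs = F @ x # r)"
proof
  assume "\<exists>x r. cs = F @ x # r"
  then obtain x r where "cs = F @ x # r" by blast
  thus "take (Suc (length (dyck_forest F))) (dyck_forest cs @ False # rest) = dyck_forest F @ [True]" by simp
next
  assume "take (Suc (length (dyck_forest F))) (dyck_forest cs @ False # rest) = dyck_forest F @ [True]"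
  thus "\<exists>x r. cs = F @ x # r"
  proof (induction F arbitrary: cs)
    case Nil
    thus ?case by (cases cs) auto
  next
    case (Cons f F)
    then obtain c cs' where cs: "cs = c # cs'" by (cases cs) auto
    let ?Z = "dyck_forest cs' @ False # rest"
    have tk: "take (Suc (length (dyck f)) + Suc (length (dyck_forest F))) (dyck c @ False # ?Z)
        = dyck f @ False # (dyck_forest F @ [True])"
      using Cons.prems unfolding cs by simp
    have "dyck c = dyck f"
      by (rule balanced_prefix_unique_take[OF balanced_dyck balanced_dyck tk])
    hence "c = f" by (rule dyck_inj)
    have "take (Suc (length (dyck_forest F))) ?Z = dyck_forest F @ [True]"
      using tk \<open>dyck c = dyck f\<close> by simp
    from Cons.IH[OF this] obtain x r where "cs' = F @ x # r" by blast
    thus ?case using cs \<open>c = f\<close> by simp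
  qed
qed

lemma count_prefix_positions:
  "length (filter (\<lambda>i. take i cs = F) [0..<length cs]) = (if \<exists>x r. cs = F @ x # r then 1 else 0)"
proof -
  have "length (filter (\<lambda>i. take i cs = F) [0..<length cs]) = card {i. i < length cs \<and> take i cs = F}"
    by (simp add: length_filter_conv_card cong: conj_cong)
  also have "{i. i < length cs \<and> take i cs = F} = (if \<exists>x r. cs = F @ x # r then {length F} else {})"
  proof (cases "\<exists>x r. cs = F @ x # r")
    case True
    then obtain x r where cs: "cs = F @ x # r" by blast
    have "{i. i < length cs \<and> take i cs = F} = {length F}"
    proof (intro equalityI subsetI)
      fix i assume "i \<in> {i. i < length cs \<and> take i cs = F}"
      hence "i < length cs" "take i cs = F" by auto
      hence "length F = i" by auto
      thus "i \<in> {length F}" by simp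
    qed (auto simp: cs)
    thus ?thesis using True by simp
  next
    case False
    have "{i. i < length cs \<and> take i cs = F} = {}"
    proof (intro equalityI subsetI)
      fix i assume "i \<in> {i. i < length cs \<and> take i cs = F}"
      hence i: "i < length cs" "take i cs = F" by auto
      hence "cs = F @ cs ! i # drop (Suc i) cs"
        by (metis Cons_nth_drop_Suc append_take_drop_id)
      thus "i \<in> {}" using False by blast
    qed auto
    thus ?thesis using False by simp
  qed
  finally show ?thesis by simp
qed

lemma count_prefix_Node:
  "count_prefix F (Node cs) = (if \<exists>x r. cs = F @ x # r then 1 else 0) + sum_list (map (count_prefix F) cs)"
  by (simp only: count_prefix.simps count_prefix_positions)

declare count_prefix.simps[simp del]

lemma occ_count_dyck:
  "occ_count (forest_pattern F) (dyck t) s = sum_list (map (count_prefix F) (children t))"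
proof (induction t arbitrary: s)
  case (Node cs)
  let ?P = "forest_pattern F"
  have "occ_count ?P (dyck_forest cs) s = sum_list (map (count_prefix F) cs)"
    if "\<forall>c\<in>set cs. \<forall>s. occ_count ?P (dyck c) s = sum_list (map (count_prefix F) (children c))" for s
    using that
  proof (induction cs arbitrary: s)
    case Nil thus ?case by simp
  next
    case (Cons c cs)
    obtain cs' where c: "c = Node cs'" by (cases c)
    have "dyck_forest (c # cs) = [True] @ dyck c @ [False] @ dyck_forest cs" by simp
    hence "occ_count ?P (dyck_forest (c # cs)) s
        = occ_count ?P [True] (dyck c @ [False] @ dyck_forest cs @ s)
          + (occ_count ?P (dyck c) ([False] @ dyck_forest cs @ s)
          + (occ_count ?P [False] (dyck_forest cs @ s) + occ_count ?P (dyck_forest cs) s))"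
      by (simp only: occ_count_append append.assoc)
    also have "occ_count ?P [False] (dyck_forest cs @ s) = 0"
      by (simp add: occ_count_def forest_pattern_def)
    also have "occ_count ?P (dyck_forest cs) s = sum_list (map (count_prefix F) cs)"
      using Cons by simp
    also have "occ_count ?P (dyck c) ([False] @ dyck_forest cs @ s) = sum_list (map (count_prefix F) cs')"
      using Cons.prems c by simp
    also have "occ_count ?P [True] (dyck c @ [False] @ dyck_forest cs @ s) = (if \<exists>x r. cs' = F @ x # r then 1 else 0)"
    proof -
      have "occ_count ?P [True] (dyck c @ [False] @ dyck_forest cs @ s) =
         (if take (Suc (length (dyck_forest F))) (dyck_forest cs' @ False # dyck_forest cs @ s) = dyck_forest F @ [True] then 1 else 0)"
        by (simp add: occ_count_def forest_pattern_def c dyck_Node)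
      thus ?thesis by (simp only: dyck_forest_prefix_iff)
    qed
    finally show ?case using c by (simp add: count_prefix_Node)
  qed
  thus ?case using Node by (simp add: dyck_Node)
qed

text \<open>Hence count_prefix counts pattern occurrences in the code, plus one possible
  contribution of the root (whose entering step is missing).\<close>
lemma count_prefix_occ_count:
  "count_prefix F t = (if \<exists>x r. children t = F @ x # r then 1 else 0) + occ_count (forest_pattern F) (dyck t) s"
  by (cases t) (simp add: count_prefix_Node occ_count_dyck)

section \<open>The cycle lemma\<close>

definition first_passage :: "nat \<Rightarrow> bool list \<Rightarrow> bool" where
  "first_passage N x \<longleftrightarrow> length x = N \<and> (\<forall>i<N. 0 \<le> height (take i x)) \<and> height x = -1"

lemma height_rotate[simp]: "height (rotate r w) = height w"
proof -
  have "height w = height (take (r mod length w) w) + height (drop (r mod length w) w)"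
    by (metis append_take_drop_id height_append)
  thus ?thesis by (simp add: rotate_drop_take)
qed

lemma height_prefix_rotate_1:
  assumes "r < length w" "i \<le> length w - r"
  shows "height (take i (rotate r w)) = height (take (r + i) w) - height (take r w)"
proof -
  have "rotate r w = drop r w @ take r w" using assms by (simp add: rotate_drop_take)
  hence "take i (rotate r w) = take i (drop r w)" using assms by simp
  moreover have "take (r + i) w = take r w @ take i (drop r w)" by (simp add: take_add)
  ultimately show ?thesis by simp
qed

lemma height_prefix_rotate_2:
  assumes "r < length w" "length w - r \<le> i" "i \<le> length w"
  shows "height (take i (rotate r w)) = height w - height (take r w) + height (take (i + r - length w) w)"
proof -
  have "rotate r w = drop r w @ take r w" using assms by (simp add: rotate_drop_take)
  moreover have "i + r - length w \<le> r" using assms by simp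
  ultimately have "take i (rotate r w) = drop r w @ take (i + r - length w) w" using assms
    by (simp add: min_def)
  moreover have "height w = height (take r w) + height (drop r w)"
    by (metis append_take_drop_id height_append)
  ultimately show ?thesis by simp
qed

definition first_min_pos :: "bool list \<Rightarrow> nat \<Rightarrow> bool" where
  "first_min_pos w r \<longleftrightarrow> r < length w \<and>
     (\<forall>j<length w. height (take r w) \<le> height (take j w)) \<and> (\<forall>j<r. height (take r w) < height (take j w))"

lemma first_passage_rotate_first_min:
  assumes r: "r < length w" and hw: "height w = -1" and fp: "first_passage (length w) (rotate r w)"
  shows "first_min_pos w r"
proof -
  let ?N = "length w" let ?h = "\<lambda>j. height (take j w)"
  have pos: "\<And>i. i < ?N \<Longrightarrow> 0 \<le> height (take i (rotate r w))" using fp by (simp add: first_passage_def)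
  have after: "?h r \<le> ?h j" if "j < ?N" "r \<le> j" for j
    using pos[of "j - r"] height_prefix_rotate_1[OF r, of "j - r"] that by simp
  have before: "?h r < ?h j" if "j < r" for j
  proof (cases "j = 0")
    case True
    have "0 \<le> height (take (?N - r) (rotate r w))" using pos that r by simp
    moreover have "height (take (?N - r) (rotate r w)) = ?h ?N - ?h r"
      using height_prefix_rotate_1[OF r, of "?N - r"] r by simp
    ultimately show ?thesis using hw True by simp
  next
    case False
    have "0 \<le> height (take (?N - r + j) (rotate r w))" using pos[of "?N - r + j"] that r by simp
    moreover have "height (take (?N - r + j) (rotate r w)) = height w - ?h r + ?h j"
      using height_prefix_rotate_2[OF r, of "?N - r + j"] r that by simp
    ultimately show ?thesis using hw by simp
  qed
  show ?thesis unfolding first_min_pos_def using r after before by (meson less_imp_le not_le)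
qed

lemma first_min_rotate_first_passage:
  assumes hw: "height w = -1" and R: "first_min_pos w r"
  shows "first_passage (length w) (rotate r w)"
proof -
  let ?N = "length w" let ?h = "\<lambda>j. height (take j w)"
  have r: "r < ?N" using R by (simp add: first_min_pos_def)
  have "0 \<le> height (take i (rotate r w))" if i: "i < ?N" for i
  proof (cases "r + i < ?N")
    case True
    thus ?thesis using height_prefix_rotate_1[OF r, of i] R by (simp add: first_min_pos_def)
  next
    case False
    hence "0 < r" using i by simp
    hence "?h r \<le> -1" using R by (force simp: first_min_pos_def)
    show ?thesis
    proof (cases "r + i = ?N")
      case True
      thus ?thesis using height_prefix_rotate_1[OF r, of i] \<open>?h r \<le> -1\<close> hw by simp
    next
      case False
      hence "i + r - ?N < r" "?N - r \<le> i" using i \<open>\<not> r + i < ?N\<close> by auto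
      thus ?thesis using height_prefix_rotate_2[OF r, of i] i R \<open>?h r \<le> -1\<close> hw
        by (fastforce simp: first_min_pos_def)
    qed
  qed
  thus ?thesis using hw by (simp add: first_passage_def del: height_rotate) simp
qed

lemma first_min_pos_exists:
  assumes "w \<noteq> []"
  shows "\<exists>r. first_min_pos w r"
proof -
  let ?N = "length w" let ?h = "\<lambda>j. height (take j w)"
  define M where "M = Min (?h ` {..<?N})"
  have fin: "finite (?h ` {..<?N})" by simp
  have "0 \<in> {..<?N}" using assms by simp
  hence "?h ` {..<?N} \<noteq> {}" by blast
  hence "M \<in> ?h ` {..<?N}" unfolding M_def using Min_in[OF fin] by blast
  then obtain r0 where r0: "r0 < ?N" "?h r0 = M" by auto
  define r where "r = (LEAST r. r < ?N \<and> ?h r = M)"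
  have r: "r < ?N \<and> ?h r = M" unfolding r_def by (rule LeastI[of _ r0]) (use r0 in auto)
  have Mle: "M \<le> ?h j" if "j < ?N" for j unfolding M_def using Min_le[OF fin] that by auto
  have "?h r < ?h j" if j: "j < r" for j
  proof -
    have "\<not> (j < ?N \<and> ?h j = M)" using not_less_Least[OF j[unfolded r_def]] by blast
    thus ?thesis using Mle[of j] r j by auto
  qed
  thus ?thesis unfolding first_min_pos_def using r Mle by auto
qed

lemma first_min_pos_unique: "first_min_pos w r \<Longrightarrow> first_min_pos w r' \<Longrightarrow> r = r'"
  unfolding first_min_pos_def by (meson linorder_neqE_nat not_le)

lemma cycle_lemma:
  assumes hw: "height w = -1"
  shows "\<exists>!r. r < length w \<and> first_passage (length w) (rotate r w)"
proof -
  have "w \<noteq> []" using hw by auto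
  then obtain r where r: "first_min_pos w r" using first_min_pos_exists by blast
  show ?thesis
  proof (rule ex1I[of _ r])
    show "r < length w \<and> first_passage (length w) (rotate r w)"
      using r first_min_rotate_first_passage[OF hw] by (simp add: first_min_pos_def)
  next
    fix r' assume "r' < length w \<and> first_passage (length w) (rotate r' w)"
    thus "r' = r" using first_passage_rotate_first_min[OF _ hw] first_min_pos_unique r by blast
  qed
qed

definition walks :: "nat \<Rightarrow> bool list set" where
  "walks N = {w. length w = N \<and> height w = -1}"

definition fp_walks :: "nat \<Rightarrow> bool list set" where
  "fp_walks N = {x. first_passage N x}"

lemma finite_walks: "finite (walks N)"
proof (rule finite_subset[OF _ finite_lists_length_eq[of "UNIV::bool set" N]])
  show "walks N \<subseteq> {xs. set xs \<subseteq> UNIV \<and> length xs = N}" unfolding walks_def by blast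
qed simp

lemma fp_walks_subset: "fp_walks N \<subseteq> walks N" by (auto simp: fp_walks_def walks_def first_passage_def)

lemma finite_fp_walks: "finite (fp_walks N)" using finite_subset[OF fp_walks_subset finite_walks] .

lemma sum_one_unique:
  fixes N :: nat
  assumes "\<exists>!r. r < N \<and> P r"
  shows "(\<Sum>r<N. if P r then c else 0) = (c::real)"
proof -
  from assms obtain r0 where r0: "r0 < N" "P r0" "\<And>r. r < N \<Longrightarrow> P r \<Longrightarrow> r = r0" by blast
  have "(\<Sum>r<N. if P r then c else 0) = (\<Sum>r<N. if r = r0 then c else 0)"
  proof (rule sum.cong[OF refl])
    fix x assume "x \<in> {..<N}"
    hence "P x \<longleftrightarrow> x = r0" using r0 by blast
    thus "(if P x then c else 0) = (if x = r0 then c else 0)" by simp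
  qed
  also have "\<dots> = c" using r0(1) by (subst sum.delta) auto
  finally show ?thesis .
qed

lemma sum_walks_via_rotations:
  fixes g :: "bool list \<Rightarrow> real"
  assumes inv: "\<And>w r. length w = N \<Longrightarrow> g (rotate r w) = g w"
  shows "(\<Sum>w\<in>walks N. g w) = real N * (\<Sum>x\<in>fp_walks N. g x)"
proof -
  have "(\<Sum>w\<in>walks N. g w) = (\<Sum>w\<in>walks N. \<Sum>r<N. if first_passage N (rotate r w) then g w else 0)"
  proof (intro sum.cong refl)
    fix w assume w: "w \<in> walks N"
    hence "\<exists>!r. r < N \<and> first_passage N (rotate r w)" using cycle_lemma[of w] by (auto simp: walks_def)
    thus "g w = (\<Sum>r<N. if first_passage N (rotate r w) then g w else 0)" by (simp add: sum_one_unique)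
  qed
  also have "\<dots> = (\<Sum>r<N. \<Sum>w\<in>walks N. if first_passage N (rotate r w) then g w else 0)"
    by (rule sum.swap)
  also have "\<dots> = (\<Sum>r<N. \<Sum>x\<in>fp_walks N. g x)"
  proof (rule sum.cong[OF refl])
    fix r assume r: "r \<in> {..<N}"
    have "(\<Sum>w\<in>walks N. if first_passage N (rotate r w) then g w else 0) = (\<Sum>w\<in>walks N \<inter> {w. first_passage N (rotate r w)}. g w)"
      by (simp add: sum.inter_restrict finite_walks)
    also have "\<dots> = (\<Sum>x\<in>fp_walks N. g x)"
    proof (rule sum.reindex_bij_witness[of _ "rotate (N - r)" "rotate r"])
      fix a assume a: "a \<in> walks N \<inter> {w. first_passage N (rotate r w)}"
      hence la: "length a = N" by (simp add: walks_def)
      show "rotate (N - r) (rotate r a) = a" using r la by (simp add: rotate_rotate)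
      show "rotate r a \<in> fp_walks N" using a by (simp add: fp_walks_def)
      show "g (rotate r a) = g a" using inv la by simp
    next
      fix b assume b: "b \<in> fp_walks N"
      hence lb: "length b = N" "height b = -1" by (simp_all add: fp_walks_def first_passage_def)
      show "rotate r (rotate (N - r) b) = b" using r lb by (simp add: rotate_rotate)
      show "rotate (N - r) b \<in> walks N \<inter> {w. first_passage N (rotate r w)}"
        using r lb b by (simp add: walks_def fp_walks_def rotate_rotate)
    qed
    finally show "(\<Sum>w\<in>walks N. if first_passage N (rotate r w) then g w else 0) = (\<Sum>x\<in>fp_walks N. g x)" .
  qed
  also have "\<dots> = real N * (\<Sum>x\<in>fp_walks N. g x)" by simp
  finally show ?thesis .
qed

section \<open>Trees as first-passage walks\<close>

abbreviation tree_walk :: "ptree \<Rightarrow> bool list" where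
  "tree_walk t \<equiv> dyck t @ [False]"

lemma first_passage_tree_walk: "nverts t = k \<Longrightarrow> first_passage (2 * k - 1) (tree_walk t)"
proof -
  assume k: "nverts t = k"
  have l: "length (dyck t) + 2 = 2 * k" using length_dyck[of t] k by simp
  have b: "balanced (dyck t)" by (rule balanced_dyck)
  show ?thesis unfolding first_passage_def
  proof (intro conjI allI impI)
    show "length (tree_walk t) = 2 * k - 1" using l by simp
    fix i assume "i < 2 * k - 1"
    hence "take i (tree_walk t) = take i (dyck t)" using l by simp
    thus "0 \<le> height (take i (tree_walk t))" using b by (simp add: balanced_def)
  next
    show "height (tree_walk t) = -1" using b by (simp add: balanced_def)
  qed
qed

lemma first_passage_is_tree_walk:
  assumes "first_passage (2 * k - 1) x" "1 \<le> k"
  shows "\<exists>t. nverts t = k \<and> x = tree_walk t"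
proof -
  have lx: "length x = 2 * k - 1" and pos: "\<And>i. i < 2 * k - 1 \<Longrightarrow> 0 \<le> height (take i x)"
    and hx: "height x = -1" using assms by (auto simp: first_passage_def)
  have ne: "x \<noteq> []" using hx by auto
  let ?u = "butlast x"
  have x: "x = ?u @ [last x]" using ne by simp
  have "2 * k - 2 = length x - 1" using lx by simp
  hence tu: "take (2 * k - 2) x = ?u" by (simp add: butlast_conv_take)
  have hu: "0 \<le> height ?u" using pos[of "2*k-2"] tu assms(2) by simp
  have hx2: "height x = height ?u + height [last x]" by (subst x, rule height_append)
  have lastx: "last x = False" using hx2 hx hu by (cases "last x") simp_all
  hence hu0: "height ?u = 0" using hx2 hx by simp
  have "balanced ?u" unfolding balanced_def
  proof (intro conjI allI hu0)
    fix i
    have "take i ?u = take (min i (2 * k - 2)) x" using tu by (metis min.commute take_take)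
    moreover have "min i (2 * k - 2) < 2 * k - 1" using assms(2) by simp
    ultimately show "0 \<le> height (take i ?u)" using pos by simp
  qed
  then obtain cs where cs: "dyck_forest cs = ?u" using balanced_is_dyck_forest by blast
  have "length (dyck (Node cs)) + 2 = 2 * nverts (Node cs)" by (rule length_dyck)
  hence "nverts (Node cs) = k" using cs lx assms(2) by (simp add: dyck_Node)
  moreover have "x = dyck (Node cs) @ [False]" using x cs lastx by (simp add: dyck_Node)
  ultimately show ?thesis by blast
qed

lemma fp_walks_eq_tree_walks: "1 \<le> k \<Longrightarrow> fp_walks (2 * k - 1) = tree_walk ` trees_of_size k"
proof (intro equalityI subsetI)
  fix x assume "1 \<le> k" "x \<in> fp_walks (2 * k - 1)"
  then obtain t where "nverts t = k" "x = tree_walk t" using first_passage_is_tree_walk unfolding fp_walks_def by blast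
  thus "x \<in> tree_walk ` trees_of_size k" unfolding trees_of_size_def by blast
next
  fix x assume "x \<in> tree_walk ` trees_of_size k"
  then obtain t where "nverts t = k" "x = tree_walk t" unfolding trees_of_size_def by blast
  thus "x \<in> fp_walks (2 * k - 1)" using first_passage_tree_walk unfolding fp_walks_def by blast
qed

lemma inj_tree_walk: "inj_on tree_walk A"
  by (intro inj_onI) (auto intro: dyck_inj)

lemma finite_trees: "1 \<le> k \<Longrightarrow> finite (trees_of_size k)"
proof -
  assume "1 \<le> k"
  hence "finite (tree_walk ` trees_of_size k)" using finite_fp_walks[of "2*k-1"] fp_walks_eq_tree_walks[of k] by simp
  thus ?thesis using finite_image_iff[OF inj_tree_walk] by blast
qed

lemma tree_of_size_exists: "\<exists>t. nverts t = Suc n"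
proof
  show "nverts (Node (replicate n (Node []))) = Suc n" by (simp add: sum_list_replicate)
qed

lemma sum_fp_walks_trees:
  "1 \<le> k \<Longrightarrow> (\<Sum>x\<in>fp_walks (2 * k - 1). g x) = (\<Sum>t\<in>trees_of_size k. g (tree_walk t))"
  using fp_walks_eq_tree_walks[of k] sum.reindex[OF inj_tree_walk, of g "trees_of_size k"] by simp

section \<open>Cyclic occurrence counts\<close>

text \<open>Counting pattern occurrences cyclically makes the count rotation invariant, so that the
  cycle lemma applies.\<close>

lemma bij_betw_add_mod: assumes "0 < N" shows "bij_betw (\<lambda>j. (j + c) mod N) {..<N} {..<(N::nat)}"
proof -
  have inj: "inj_on (\<lambda>j. (j + c) mod N) {..<N}"
  proof (rule inj_onI)
    fix x y assume xy: "x \<in> {..<N}" "y \<in> {..<N}" "(x + c) mod N = (y + c) mod N"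
    have *: "a = b" if "a < N" "b < N" "(a + c) mod N = (b + c) mod N" "a \<le> b" for a b
    proof -
      have "N dvd (b + c) - (a + c)" using mod_eq_dvd_iff_nat[of "a + c" "b + c" N] that by simp
      hence "N dvd b - a" by simp
      moreover have "b - a < N" using that by simp
      ultimately have "b - a = 0" by (meson dvd_imp_le not_gr0 not_le)
      thus ?thesis using that(4) by simp
    qed
    show "x = y"
    proof (cases "x \<le> y")
      case True thus ?thesis using *[of x y] xy by simp
    next
      case False thus ?thesis using *[of y x] xy by simp
    qed
  qed
  have sub: "(\<lambda>j. (j + c) mod N) ` {..<N} \<subseteq> {..<N}" using assms by auto
  have "(\<lambda>j. (j + c) mod N) ` {..<N} = {..<N}"
    by (rule endo_inj_surj[OF _ sub inj]) simp
  thus ?thesis using inj by (simp add: bij_betw_def)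
qed

definition cyclic_match :: "bool list \<Rightarrow> bool list \<Rightarrow> nat \<Rightarrow> bool" where
  "cyclic_match P w j \<longleftrightarrow> take (length P) (rotate j w) = P"

definition cyclic_count :: "bool list \<Rightarrow> bool list \<Rightarrow> nat" where
  "cyclic_count P w = (\<Sum>j<length w. if cyclic_match P w j then 1 else 0)"

lemma cyclic_match_rotate: "cyclic_match P (rotate r w) j \<longleftrightarrow> cyclic_match P w ((j + r) mod length w)"
  unfolding cyclic_match_def by (simp add: rotate_rotate rotate_conv_mod[of "j + r" w])

lemma cyclic_count_rotate: "cyclic_count P (rotate r w) = cyclic_count P w"
proof (cases "w = []")
  case True thus ?thesis by simp
next
  case False
  hence N: "0 < length w" by simp
  have "cyclic_count P (rotate r w) = (\<Sum>j<length w. (\<lambda>d. if cyclic_match P w d then 1 else 0) ((j + r) mod length w))"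
    unfolding cyclic_count_def by (simp add: cyclic_match_rotate)
  also have "\<dots> = (\<Sum>d<length w. if cyclic_match P w d then 1 else 0)"
    by (rule sum.reindex_bij_betw[OF bij_betw_add_mod[OF N]])
  finally show ?thesis by (simp add: cyclic_count_def)
qed

lemma cyclic_count_tree_walk:
  assumes P: "P = True # P'" and L: "length P \<le> length (dyck t) + 1"
  shows "cyclic_count P (tree_walk t) = occ_count P (dyck t) (False # tree_walk t)"
proof -
  let ?x = "tree_walk t" let ?n = "length (dyck t)"
  have "cyclic_count P ?x = (\<Sum>j<?n. if cyclic_match P ?x j then 1 else 0) + (if cyclic_match P ?x ?n then 1 else 0)"
    unfolding cyclic_count_def by simp
  also have "cyclic_match P ?x ?n = False"
  proof -
    have "rotate ?n ?x = False # dyck t" by (simp add: rotate_drop_take)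
    thus ?thesis unfolding cyclic_match_def P by simp
  qed
  also have "(\<Sum>j<?n. if cyclic_match P ?x j then 1 else 0) = occ_count P (dyck t) (False # tree_walk t)"
    unfolding occ_count_def
  proof (rule sum.cong[OF refl])
    fix j assume "j \<in> {..<?n}"
    hence j: "j < ?n" by simp
    have r: "rotate j ?x = drop j ?x @ take j ?x" using j by (simp add: rotate_drop_take)
    have d: "drop j (dyck t @ False # tree_walk t) = drop j ?x @ ?x" using j by simp
    have m: "length P - length (drop j ?x) \<le> j" using L j by simp
    have "take (length P) (drop j ?x @ take j ?x) = take (length P) (drop j ?x) @ take (length P - length (drop j ?x)) (take j ?x)"
      by (rule take_append)
    also have "take (length P - length (drop j ?x)) (take j ?x) = take (length P - length (drop j ?x)) ?x"
      using m by (simp add: min_def)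
    also have "take (length P) (drop j ?x) @ take (length P - length (drop j ?x)) ?x = take (length P) (drop j ?x @ ?x)"
      by (rule take_append[symmetric])
    finally have "take (length P) (drop j ?x @ take j ?x) = take (length P) (drop j ?x @ ?x)" .
    thus "(if cyclic_match P ?x j then 1 else 0) = (if take (length P) (drop j (dyck t @ False # tree_walk t)) = P then 1 else 0)"
      unfolding cyclic_match_def r d by simp
  qed
  finally show ?thesis by simp
qed

lemma count_prefix_cyclic_count:
  assumes "length (forest_pattern F) \<le> length (dyck t) + 1"
  shows "\<exists>\<delta>\<le>1. count_prefix F t = \<delta> + cyclic_count (forest_pattern F) (tree_walk t)"
proof -
  have "cyclic_count (forest_pattern F) (tree_walk t) = occ_count (forest_pattern F) (dyck t) (False # tree_walk t)"
    by (rule cyclic_count_tree_walk[OF _ assms]) (simp add: forest_pattern_def)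
  thus ?thesis using count_prefix_occ_count[of F t "False # tree_walk t"] by auto
qed

lemma sum_walks_rotate:
  assumes "j \<le> N"
  shows "(\<Sum>w\<in>walks N. G (rotate j w)) = (\<Sum>u\<in>walks N. G u)"
proof (rule sum.reindex_bij_witness[of _ "rotate (N - j)" "rotate j"])
  fix a assume a: "a \<in> walks N"
  hence la: "length a = N" by (simp add: walks_def)
  show "rotate (N - j) (rotate j a) = a" using assms la by (simp add: rotate_rotate)
  show "rotate j a \<in> walks N" using a by (simp add: walks_def)
  show "G (rotate j a) = G (rotate j a)" ..
next
  fix b assume b: "b \<in> walks N"
  hence lb: "length b = N" by (simp add: walks_def)
  show "rotate j (rotate (N - j) b) = b" using assms lb by (simp add: rotate_rotate)
  show "rotate (N - j) b \<in> walks N" using b by (simp add: walks_def)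
qed

lemma sum_indicator: "finite A \<Longrightarrow> (\<Sum>x\<in>A. if Q x then 1 else 0 :: nat) = card {x\<in>A. Q x}"
proof -
  assume A: "finite A"
  have "(\<Sum>x\<in>A \<inter> {x. Q x}. 1::nat) = (\<Sum>x\<in>A. if x \<in> {x. Q x} then 1 else 0)"
    by (rule sum.inter_restrict[OF A])
  moreover have "A \<inter> {x. Q x} = {x\<in>A. Q x}" by blast
  ultimately show ?thesis by simp
qed

text \<open>First moment over all walks: by rotation invariance every position contributes like
  position 0.\<close>
lemma sum_walks_cyclic_count:
  "(\<Sum>w\<in>walks N. cyclic_count P w) = N * card {w\<in>walks N. take (length P) w = P}"
proof -
  have "(\<Sum>w\<in>walks N. cyclic_count P w) = (\<Sum>w\<in>walks N. \<Sum>j<N. if cyclic_match P w j then 1 else 0)"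
    by (rule sum.cong[OF refl]) (simp add: cyclic_count_def walks_def)
  also have "\<dots> = (\<Sum>j<N. \<Sum>w\<in>walks N. if cyclic_match P w j then 1 else 0)" by (rule sum.swap)
  also have "\<dots> = (\<Sum>j<N. \<Sum>w\<in>walks N. if take (length P) w = P then 1 else 0)"
  proof (rule sum.cong[OF refl])
    fix j assume "j \<in> {..<N}"
    hence "j \<le> N" by simp
    from sum_walks_rotate[OF this, of "\<lambda>u. if take (length P) u = P then 1 else (0::nat)"]
    show "(\<Sum>w\<in>walks N. if cyclic_match P w j then 1 else (0::nat)) = (\<Sum>w\<in>walks N. if take (length P) w = P then 1 else (0::nat))"
      by (simp add: cyclic_match_def)
  qed
  also have "\<dots> = N * card {w\<in>walks N. take (length P) w = P}"
    by (simp add: sum_indicator finite_walks)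
  finally show ?thesis .
qed

text \<open>Second moment over all walks: by rotating, a pair of positions (j, j') contributes like
  the pair (0, j' - j).\<close>
lemma sum_walks_match_pairs_row:
  assumes j: "j < N"
  shows "(\<Sum>j'<N. \<Sum>w\<in>walks N. if cyclic_match P w j \<and> cyclic_match P w j' then 1 else 0)
       = (\<Sum>d<N. card {w\<in>walks N. take (length P) w = P \<and> cyclic_match P w d})"
proof -
  let ?f = "\<lambda>d. card {w\<in>walks N. take (length P) w = P \<and> cyclic_match P w d}"
  let ?d = "\<lambda>j'. (j' + (N - j)) mod N"
  have "(\<Sum>w\<in>walks N. if cyclic_match P w j \<and> cyclic_match P w j' then 1 else 0) = ?f (?d j')"
    if j': "j' < N" for j'
  proof -
    let ?H = "\<lambda>u. if take (length P) u = P \<and> cyclic_match P u (?d j') then 1 else (0::nat)"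
    have "(\<Sum>w\<in>walks N. if cyclic_match P w j \<and> cyclic_match P w j' then 1 else 0) = (\<Sum>w\<in>walks N. ?H (rotate j w))"
    proof (rule sum.cong[OF refl])
      fix w assume "w \<in> walks N"
      hence lw: "length w = N" by (simp add: walks_def)
      have "(?d j' + j) mod N = (j' + (N - j) + j) mod N" by (simp add: mod_add_left_eq)
      also have "j' + (N - j) + j = j' + N" using j by simp
      finally have "(?d j' + j) mod N = j'" using j' by simp
      hence "cyclic_match P (rotate j w) (?d j') \<longleftrightarrow> cyclic_match P w j'"
        by (simp add: cyclic_match_rotate lw)
      moreover have "take (length P) (rotate j w) = P \<longleftrightarrow> cyclic_match P w j" by (simp add: cyclic_match_def)
      ultimately show "(if cyclic_match P w j \<and> cyclic_match P w j' then 1 else 0) = ?H (rotate j w)" by simp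
    qed
    also have "\<dots> = (\<Sum>u\<in>walks N. ?H u)" using sum_walks_rotate[of j N ?H] j by simp
    also have "\<dots> = ?f (?d j')" by (simp add: sum_indicator finite_walks)
    finally show ?thesis .
  qed
  hence "(\<Sum>j'<N. \<Sum>w\<in>walks N. if cyclic_match P w j \<and> cyclic_match P w j' then 1 else 0) = (\<Sum>j'<N. ?f (?d j'))"
    by (intro sum.cong) auto
  also have "\<dots> = (\<Sum>d<N. ?f d)" using j by (intro sum.reindex_bij_betw bij_betw_add_mod) simp
  finally show ?thesis .
qed

lemma sum_walks_cyclic_count_sq:
  "(\<Sum>w\<in>walks N. (cyclic_count P w)^2) = N * (\<Sum>d<N. card {w\<in>walks N. take (length P) w = P \<and> cyclic_match P w d})"
proof -
  have "(\<Sum>w\<in>walks N. (cyclic_count P w)^2) = (\<Sum>w\<in>walks N. \<Sum>j<N. \<Sum>j'<N. if cyclic_match P w j \<and> cyclic_match P w j' then 1 else (0::nat))"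
  proof (rule sum.cong[OF refl])
    fix w assume "w \<in> walks N"
    hence lw: "length w = N" by (simp add: walks_def)
    have "(cyclic_count P w)^2 = (\<Sum>j<N. if cyclic_match P w j then 1 else 0) * (\<Sum>j'<N. if cyclic_match P w j' then 1 else (0::nat))"
      by (simp add: cyclic_count_def lw power2_eq_square)
    also have "\<dots> = (\<Sum>j<N. \<Sum>j'<N. (if cyclic_match P w j then 1 else 0) * (if cyclic_match P w j' then 1 else (0::nat)))"
      by (rule sum_product)
    also have "\<dots> = (\<Sum>j<N. \<Sum>j'<N. if cyclic_match P w j \<and> cyclic_match P w j' then 1 else (0::nat))"
      by (intro sum.cong refl) simp
    finally show "(cyclic_count P w)^2 = (\<Sum>j<N. \<Sum>j'<N. if cyclic_match P w j \<and> cyclic_match P w j' then 1 else (0::nat))" .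
  qed
  also have "\<dots> = (\<Sum>j<N. \<Sum>j'<N. \<Sum>w\<in>walks N. if cyclic_match P w j \<and> cyclic_match P w j' then 1 else 0)"
    by (simp add: sum.swap[of _ "walks N"])
  also have "\<dots> = (\<Sum>j<N. \<Sum>d<N. card {w\<in>walks N. take (length P) w = P \<and> cyclic_match P w d})"
    by (intro sum.cong refl sum_walks_match_pairs_row) simp
  finally show ?thesis by simp
qed

section \<open>Counting words with prescribed letters\<close>

lemma card_subsets_prescribed:
  assumes S: "S \<subseteq> {..<N}" and T: "T \<subseteq> S" and Tn: "card T \<le> n"
  shows "card {A. A \<subseteq> {..<N} \<and> card A = n \<and> A \<inter> S = T} = (N - card S) choose (n - card T)"
proof -
  have finS: "finite S" using S finite_subset by blast
  have finT: "finite T" using T finS finite_subset by blast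
  let ?X = "{A. A \<subseteq> {..<N} \<and> card A = n \<and> A \<inter> S = T}"
  let ?Y = "{B. B \<subseteq> {..<N} - S \<and> card B = n - card T}"
  have to_Y: "A - S \<in> ?Y" if "A \<in> ?X" for A
  proof -
    have A: "A \<subseteq> {..<N}" "A \<inter> S = T" "card A = n" using that by auto
    have fA: "finite A" using A(1) finite_subset by blast
    have "A = (A - S) \<union> T" "(A - S) \<inter> T = {}" using A by auto
    hence "card A = card (A - S) + card T" using fA finT
      by (metis card_Un_disjoint finite_Diff)
    thus ?thesis using A by auto
  qed
  have to_X: "B \<union> T \<in> ?X" if "B \<in> ?Y" for B
  proof -
    have B: "B \<subseteq> {..<N} - S" "card B = n - card T" using that by auto
    have fB: "finite B" using B(1) finite_subset by blast
    have "B \<inter> T = {}" using B(1) T by blast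
    hence "card (B \<union> T) = card B + card T" using fB finT by (simp add: card_Un_disjoint)
    hence "card (B \<union> T) = n" using B(2) Tn by simp
    moreover have "B \<union> T \<subseteq> {..<N}" using B(1) T S by blast
    moreover have "(B \<union> T) \<inter> S = T" using B(1) T by blast
    ultimately show ?thesis by blast
  qed
  have "card ?X = card ?Y"
  proof (rule bij_betw_same_card[of "\<lambda>A. A - S"], rule bij_betw_byWitness[of _ "\<lambda>B. B \<union> T"])
    show "\<forall>A\<in>?X. A - S \<union> T = A" by blast
    show "\<forall>B\<in>?Y. B \<union> T - S = B" using T by blast
    show "(\<lambda>A. A - S) ` ?X \<subseteq> ?Y" using to_Y by blast
    show "(\<lambda>B. B \<union> T) ` ?Y \<subseteq> ?X" using to_X by blast
  qed
  also have "\<dots> = card ({..<N} - S) choose (n - card T)" by (rule n_subsets) simp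
  also have "card ({..<N} - S) = N - card S" using S finS by (simp add: card_Diff_subset)
  finally show ?thesis .
qed

lemma bij_betw_true_positions:
  assumes S: "S \<subseteq> {..<N}"
  shows "bij_betw (\<lambda>w. {i. i < N \<and> w ! i})
     {w. length w = N \<and> length (filter id w) = n \<and> (\<forall>p\<in>S. w ! p = f p)}
     {A. A \<subseteq> {..<N} \<and> card A = n \<and> A \<inter> S = {p\<in>S. f p}}"
  (is "bij_betw ?phi ?W ?X")
proof (rule bij_betw_byWitness[of _ "\<lambda>A. map (\<lambda>i. i \<in> A) [0..<N]"])
  show "\<forall>w\<in>?W. map (\<lambda>i. i \<in> ?phi w) [0..<N] = w" by (auto intro: nth_equalityI)
  show "\<forall>A\<in>?X. ?phi (map (\<lambda>i. i \<in> A) [0..<N]) = A" by auto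
  show "?phi ` ?W \<subseteq> ?X"
  proof
    fix A assume "A \<in> ?phi ` ?W"
    then obtain w where w: "w \<in> ?W" and A: "A = ?phi w" by blast
    have lw: "length w = N" "length (filter id w) = n" using w by auto
    have "card {i. i < length w \<and> id (w ! i)} = n" using lw(2) by (simp only: length_filter_conv_card)
    hence "card A = n" using A lw(1) by simp
    moreover have "A \<inter> S = {p\<in>S. f p}" using w A S by auto
    ultimately show "A \<in> ?X" using A by auto
  qed
  show "(\<lambda>A. map (\<lambda>i. i \<in> A) [0..<N]) ` ?X \<subseteq> ?W"
  proof
    fix w assume "w \<in> (\<lambda>A. map (\<lambda>i. i \<in> A) [0..<N]) ` ?X"
    then obtain A where A: "A \<in> ?X" and w: "w = map (\<lambda>i. i \<in> A) [0..<N]" by blast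
    have "length (filter id w) = card {i. i < N \<and> i \<in> A}"
      using w by (simp add: length_filter_conv_card cong: conj_cong)
    also have "{i. i < N \<and> i \<in> A} = A" using A by auto
    also have "card A = n" using A by simp
    finally have "length (filter id w) = n" .
    moreover have "w ! p = f p" if p: "p \<in> S" for p
    proof -
      have "p < N" using p S by auto
      hence "w ! p = (p \<in> A)" using w by simp
      also have "\<dots> = f p" using A p by blast
      finally show ?thesis .
    qed
    ultimately show "w \<in> ?W" using w by simp
  qed
qed

lemma card_words_prescribed:
  assumes S: "S \<subseteq> {..<N}" and Tn: "card {p\<in>S. f p} \<le> n"
  shows "card {w. length w = N \<and> length (filter id w) = n \<and> (\<forall>p\<in>S. w ! p = f p)}
       = (N - card S) choose (n - card {p\<in>S. f p})"
proof -
  have "card {w. length w = N \<and> length (filter id w) = n \<and> (\<forall>p\<in>S. w ! p = f p)}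
      = card {A. A \<subseteq> {..<N} \<and> card A = n \<and> A \<inter> S = {p\<in>S. f p}}"
    by (rule bij_betw_same_card[OF bij_betw_true_positions[OF S]])
  also have "\<dots> = (N - card S) choose (n - card {p\<in>S. f p})"
    by (rule card_subsets_prescribed[OF S _ Tn]) auto
  finally show ?thesis .
qed

lemma walks_odd_iff: "w \<in> walks (2 * n + 1) \<longleftrightarrow> length w = 2 * n + 1 \<and> length (filter id w) = n"
  by (auto simp: walks_def height_def)

lemma take_eq_nth: "length P \<le> length w \<Longrightarrow> take (length P) w = P \<longleftrightarrow> (\<forall>p<length P. w ! p = P ! p)"
  by (auto simp: list_eq_iff_nth_eq)

lemma card_true_positions: "card {p\<in>{..<length P}. P ! p} = length (filter id P)"
  by (simp add: length_filter_conv_card lessThan_def Collect_conj_eq[symmetric])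

lemma card_true_positions_shift: "card {p\<in>{d..<d + length P}. P ! (p - d)} = length (filter id P)"
proof -
  have "{p\<in>{d..<d + length P}. P ! (p - d)} = (\<lambda>i. i + d) ` {p\<in>{..<length P}. P ! p}"
  proof (intro equalityI subsetI)
    fix p assume p: "p \<in> {p\<in>{d..<d + length P}. P ! (p - d)}"
    hence "p - d \<in> {p\<in>{..<length P}. P ! p}" "p = (p - d) + d" by auto
    thus "p \<in> (\<lambda>i. i + d) ` {p\<in>{..<length P}. P ! p}" by blast
  qed auto
  moreover have "inj_on (\<lambda>i. i + d) {p\<in>{..<length P}. P ! p}" by (simp add: inj_on_def)
  ultimately show ?thesis using card_true_positions by (simp add: card_image)
qed

lemma card_walks_prefix:
  assumes N: "N = 2 * n + 1" and L: "length P \<le> N" and a: "length (filter id P) \<le> n"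
  shows "card {w\<in>walks N. take (length P) w = P} = (N - length P) choose (n - length (filter id P))"
proof -
  let ?L = "length P"
  have "{w\<in>walks N. take ?L w = P} = {w. length w = N \<and> length (filter id w) = n \<and> (\<forall>p\<in>{..<?L}. w ! p = P ! p)}"
  proof -
    have WN: "\<And>w. w \<in> walks N \<longleftrightarrow> length w = N \<and> length (filter id w) = n" using walks_odd_iff N by simp
    have "\<And>w. length w = N \<Longrightarrow> take ?L w = P \<longleftrightarrow> (\<forall>p\<in>{..<?L}. w ! p = P ! p)"
      using take_eq_nth[of P] L by (simp add: lessThan_iff Ball_def)
    thus ?thesis using WN by blast
  qed
  moreover have T: "card {p\<in>{..<?L}. P ! p} = length (filter id P)" by (rule card_true_positions)
  moreover have "card {w. length w = N \<and> length (filter id w) = n \<and> (\<forall>p\<in>{..<?L}. w ! p = P ! p)}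
      = (N - card {..<?L}) choose (n - card {p\<in>{..<?L}. P ! p})"
    by (rule card_words_prescribed) (use L a T in auto)
  ultimately show ?thesis by simp
qed

lemma cyclic_match_inside:
  assumes "length w = N" "d + length P \<le> N" "0 < length P"
  shows "cyclic_match P w d \<longleftrightarrow> (\<forall>p\<in>{d..<d + length P}. w ! p = P ! (p - d))"
proof -
  have dN: "d < N" using assms(2,3) by linarith
  have "rotate d w = drop d w @ take d w" using assms dN by (simp add: rotate_drop_take)
  hence "take (length P) (rotate d w) = take (length P) (drop d w)" using assms by simp
  hence "cyclic_match P w d \<longleftrightarrow> take (length P) (drop d w) = P" by (simp add: cyclic_match_def)
  also have "\<dots> \<longleftrightarrow> (\<forall>i<length P. drop d w ! i = P ! i)" by (rule take_eq_nth) (use assms in simp)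
  also have "\<dots> \<longleftrightarrow> (\<forall>i<length P. w ! (d + i) = P ! i)" using assms by simp
  also have "\<dots> \<longleftrightarrow> (\<forall>p\<in>{d..<d + length P}. w ! p = P ! (p - d))"
  proof
    assume H: "\<forall>i<length P. w ! (d + i) = P ! i"
    show "\<forall>p\<in>{d..<d + length P}. w ! p = P ! (p - d)"
    proof
      fix p assume "p \<in> {d..<d + length P}"
      hence "p - d < length P" "d + (p - d) = p" by auto
      thus "w ! p = P ! (p - d)" using H by metis
    qed
  next
    assume H: "\<forall>p\<in>{d..<d + length P}. w ! p = P ! (p - d)"
    show "\<forall>i<length P. w ! (d + i) = P ! i"
    proof (intro allI impI)
      fix i assume "i < length P"
      hence "d + i \<in> {d..<d + length P}" by simp
      thus "w ! (d + i) = P ! i" using H by fastforce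
    qed
  qed
  finally show ?thesis .
qed

lemma card_walks_two_matches:
  assumes N: "N = 2 * n + 1" and d: "length P \<le> d" "d + length P \<le> N" and a: "2 * length (filter id P) \<le> n"
    and L0: "0 < length P"
  shows "card {w\<in>walks N. take (length P) w = P \<and> cyclic_match P w d} = (N - 2 * length P) choose (n - 2 * length (filter id P))"
proof -
  let ?L = "length P"
  let ?S = "{..<?L} \<union> {d..<d + ?L}"
  let ?g = "\<lambda>p. if p < ?L then P ! p else P ! (p - d)"
  have WN: "\<And>w. w \<in> walks N \<longleftrightarrow> length w = N \<and> length (filter id w) = n" using walks_odd_iff N by simp
  have eq: "{w\<in>walks N. take ?L w = P \<and> cyclic_match P w d} = {w. length w = N \<and> length (filter id w) = n \<and> (\<forall>p\<in>?S. w ! p = ?g p)}"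
  proof -
    have "take ?L w = P \<and> cyclic_match P w d \<longleftrightarrow> (\<forall>p\<in>?S. w ! p = ?g p)" if lw: "length w = N" for w
    proof -
      have "take ?L w = P \<longleftrightarrow> (\<forall>p\<in>{..<?L}. w ! p = ?g p)"
        using take_eq_nth[of P w] lw d by (auto simp: Ball_def)
      moreover have "cyclic_match P w d \<longleftrightarrow> (\<forall>p\<in>{d..<d + ?L}. w ! p = ?g p)"
        using cyclic_match_inside[OF lw d(2) L0] d by auto
      ultimately show ?thesis by blast
    qed
    thus ?thesis using WN by blast
  qed
  have disj: "{..<?L} \<inter> {d..<d + ?L} = {}" using d by auto
  have cS: "card ?S = 2 * ?L" using disj by (simp add: card_Un_disjoint)
  have T1: "card {p\<in>{..<?L}. P ! p} = length (filter id P)" by (rule card_true_positions)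
  have T2: "card {p\<in>{d..<d + ?L}. P ! (p - d)} = length (filter id P)" by (rule card_true_positions_shift)
  have cT: "card {p\<in>?S. ?g p} = 2 * length (filter id P)"
  proof -
    have "{p\<in>?S. ?g p} = {p\<in>{..<?L}. P ! p} \<union> {p\<in>{d..<d + ?L}. P ! (p - d)}" using d by auto
    moreover have "{p\<in>{..<?L}. P ! p} \<inter> {p\<in>{d..<d + ?L}. P ! (p - d)} = {}" using disj by blast
    ultimately show ?thesis using T1 T2 by (simp add: card_Un_disjoint)
  qed
  have "card {w. length w = N \<and> length (filter id w) = n \<and> (\<forall>p\<in>?S. w ! p = ?g p)}
      = (N - card ?S) choose (n - card {p\<in>?S. ?g p})"
    by (rule card_words_prescribed) (use d a cT in auto)
  thus ?thesis using eq cS cT by simp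
qed

lemma card_near_positions: "card {d\<in>{..<N}. d < L \<or> N < d + L} \<le> 2 * L"
proof -
  have "{d\<in>{..<N}. d < L \<or> N < d + L} \<subseteq> {..<L} \<union> {N - L..<N}" by auto
  hence "card {d\<in>{..<N}. d < L \<or> N < d + L} \<le> card ({..<L} \<union> {N - L..<N})"
    by (rule card_mono[rotated]) simp
  also have "\<dots> \<le> card {..<L} + card {N - L..<N}" by (rule card_Un_le)
  also have "\<dots> \<le> 2 * L" by simp
  finally show ?thesis .
qed

text \<open>Bounding the pair sum: the at most 2L overlapping positions are bounded by the
  one-occurrence count.\<close>
lemma sum_pair_matches_bound:
  assumes N: "N = 2 * n + 1" and L: "2 * length P \<le> N" and a: "2 * length (filter id P) \<le> n"
    and L0: "0 < length P"
  shows "(\<Sum>d<N. card {w\<in>walks N. take (length P) w = P \<and> cyclic_match P w d})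
      \<le> N * ((N - 2 * length P) choose (n - 2 * length (filter id P)))
        + 2 * length P * ((N - length P) choose (n - length (filter id P)))"
proof -
  let ?L = "length P"
  let ?C1 = "(N - ?L) choose (n - length (filter id P))"
  let ?C2 = "(N - 2 * ?L) choose (n - 2 * length (filter id P))"
  let ?f = "\<lambda>d. card {w\<in>walks N. take (length P) w = P \<and> cyclic_match P w d}"
  have C1: "card {w\<in>walks N. take ?L w = P} = ?C1" by (rule card_walks_prefix) (use N L a in auto)
  have b: "?f d \<le> ?C2 + (if d < ?L \<or> N < d + ?L then ?C1 else 0)" for d
  proof (cases "d < ?L \<or> N < d + ?L")
    case True
    have "?f d \<le> card {w\<in>walks N. take ?L w = P}"
      by (rule card_mono) (auto simp: finite_walks)
    thus ?thesis using True C1 by simp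
  next
    case False
    thus ?thesis using card_walks_two_matches[OF N _ _ a L0, of d] by simp
  qed
  have "(\<Sum>d<N. ?f d) \<le> (\<Sum>d<N. ?C2 + (if d < ?L \<or> N < d + ?L then ?C1 else 0))"
    by (rule sum_mono) (rule b)
  also have "\<dots> = N * ?C2 + (\<Sum>d<N. if d < ?L \<or> N < d + ?L then ?C1 else 0)"
    by (simp add: sum.distrib)
  finally have s1: "(\<Sum>d<N. ?f d) \<le> N * ?C2 + (\<Sum>d<N. if d < ?L \<or> N < d + ?L then ?C1 else 0)" .
  have s2: "(\<Sum>d<N. if d < ?L \<or> N < d + ?L then ?C1 else 0) = card {d\<in>{..<N}. d < ?L \<or> N < d + ?L} * ?C1"
    by (simp add: sum.If_cases Int_def)
  have s3: "card {d\<in>{..<N}. d < ?L \<or> N < d + ?L} * ?C1 \<le> 2 * ?L * ?C1"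
    using card_near_positions by (rule mult_right_mono) simp
  show ?thesis using s1 s2 s3 by linarith
qed

section \<open>Moments of cyclic counts over trees\<close>

lemma sum_trees_via_walks:
  fixes g :: "bool list \<Rightarrow> real"
  assumes "\<And>w r. length w = 2 * n + 1 \<Longrightarrow> g (rotate r w) = g w"
  shows "(\<Sum>w\<in>walks (2 * n + 1). g w) = real (2 * n + 1) * (\<Sum>t\<in>trees_of_size (n + 1). g (tree_walk t))"
  using sum_walks_via_rotations[OF assms] sum_fp_walks_trees[of "n + 1" g] by simp

lemma card_trees:
  "real (card (trees_of_size (n + 1))) * real (2 * n + 1) = real ((2 * n + 1) choose n)"
proof -
  have "card (walks (2 * n + 1)) = (2 * n + 1) choose n"
    using card_walks_prefix[of "2 * n + 1" n "[]"] by simp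
  thus ?thesis using sum_trees_via_walks[of n "\<lambda>_. 1"] by simp
qed

lemma sum_trees_cyclic_count:
  assumes "length P \<le> 2 * n + 1" "length (filter id P) \<le> n"
  shows "(\<Sum>t\<in>trees_of_size (n + 1). real (cyclic_count P (tree_walk t)))
       = real ((2 * n + 1 - length P) choose (n - length (filter id P)))"
proof -
  let ?N = "2 * n + 1"
  have "real ?N * (\<Sum>t\<in>trees_of_size (n + 1). real (cyclic_count P (tree_walk t)))
      = real (\<Sum>w\<in>walks ?N. cyclic_count P w)"
    using sum_trees_via_walks[of n "\<lambda>w. real (cyclic_count P w)"] by (simp add: cyclic_count_rotate)
  also have "\<dots> = real ?N * real ((?N - length P) choose (n - length (filter id P)))"
    using sum_walks_cyclic_count[where N = ?N and P = P] card_walks_prefix[of ?N n P] assms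
    by (simp add: algebra_simps)
  finally show ?thesis by simp
qed

lemma sum_trees_cyclic_count_sq:
  assumes "2 * length P \<le> 2 * n + 1" "2 * length (filter id P) \<le> n" "0 < length P"
  shows "(\<Sum>t\<in>trees_of_size (n + 1). real (cyclic_count P (tree_walk t))^2)
       \<le> real (2 * n + 1) * real ((2 * n + 1 - 2 * length P) choose (n - 2 * length (filter id P)))
         + 2 * real (length P) * real ((2 * n + 1 - length P) choose (n - length (filter id P)))"
proof -
  let ?N = "2 * n + 1"
  let ?C1 = "(?N - length P) choose (n - length (filter id P))"
  let ?C2 = "(?N - 2 * length P) choose (n - 2 * length (filter id P))"
  have "real ?N * (\<Sum>t\<in>trees_of_size (n + 1). real (cyclic_count P (tree_walk t))^2)
      = real (\<Sum>w\<in>walks ?N. (cyclic_count P w)^2)"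
    using sum_trees_via_walks[of n "\<lambda>w. real (cyclic_count P w)^2"] by (simp add: cyclic_count_rotate)
  also have "\<dots> = real ?N * real (\<Sum>d<?N. card {w\<in>walks ?N. take (length P) w = P \<and> cyclic_match P w d})"
    by (simp only: sum_walks_cyclic_count_sq of_nat_mult)
  also have "\<dots> \<le> real ?N * real (?N * ?C2 + 2 * length P * ?C1)"
    using sum_pair_matches_bound[of ?N n P] assms
    by (intro mult_left_mono) (simp_all only: of_nat_le_iff of_nat_0_le_iff)
  finally have "(\<Sum>t\<in>trees_of_size (n + 1). real (cyclic_count P (tree_walk t))^2) \<le> real (?N * ?C2 + 2 * length P * ?C1)"
    by (rule mult_left_le_imp_le) simp
  thus ?thesis by (simp only: of_nat_add of_nat_mult of_nat_numeral)
qed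

section \<open>Ratios of binomial coefficients\<close>

text \<open>Removing s letters, q of which are True, from words of length 2n+1 with n letters True
  changes the count by a factor tending to 1/2^s.\<close>

definition binom_ratio :: "nat \<Rightarrow> nat \<Rightarrow> nat \<Rightarrow> real" where
  "binom_ratio s q n = real ((2 * n + 1 - s) choose (n - q)) / real ((2 * n + 1) choose n)"

lemma solve_product_eq: "(x::real) * c = m * c' \<Longrightarrow> 0 < m \<Longrightarrow> c' = c * (x / m)"
  by (simp add: field_simps)

lemma binom_ratio_step_up:
  assumes "s + 2 \<le> n"
  shows "binom_ratio (Suc s) 0 n = binom_ratio s 0 n * ((real n + 1 - real s) / (2 * real n + 1 - real s))"
proof -
  let ?M = "2 * n + 1 - s"
  have e: "(?M - n) * (?M choose n) = ?M * ((?M - 1) choose n)" by (rule binomial_absorb_comp)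
  have M1: "?M - 1 = 2 * n + 1 - Suc s" by simp
  have Mn: "?M - n = n + 1 - s" using assms by simp
  have e': "real (?M - n) * real (?M choose n) = real ?M * real ((?M - 1) choose n)"
    using e by (metis of_nat_mult)
  have "real ((?M - 1) choose n) = real (?M choose n) * (real (?M - n) / real ?M)"
    by (rule solve_product_eq[OF e']) (use assms in simp)
  moreover have q1: "real (n + 1 - s) = real n + 1 - real s" and q2: "real ?M = 2 * real n + 1 - real s"
    using assms by auto
  ultimately have h: "real ((2 * n + 1 - Suc s) choose n) = real (?M choose n) * ((real n + 1 - real s) / (2 * real n + 1 - real s))"
    unfolding M1 Mn q1 q2 by simp
  show ?thesis unfolding binom_ratio_def diff_zero h by simp
qed

lemma binom_ratio_step:
  assumes "s + q + 2 \<le> n"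
  shows "binom_ratio (Suc s) (Suc q) n = binom_ratio s q n * ((real n - real q) / (2 * real n + 1 - real s))"
proof -
  let ?M = "2 * n + 1 - s" let ?r = "n - q"
  have r: "?r = Suc (n - Suc q)" using assms by simp
  have e: "Suc (n - Suc q) * (?M choose Suc (n - Suc q)) = ?M * ((?M - 1) choose (n - Suc q))"
    by (rule binomial_absorption)
  have M1: "?M - 1 = 2 * n + 1 - Suc s" by simp
  have e': "real ?r * real (?M choose ?r) = real ?M * real ((?M - 1) choose (n - Suc q))"
    using e unfolding r[symmetric] by (metis of_nat_mult)
  have "real ((?M - 1) choose (n - Suc q)) = real (?M choose ?r) * (real ?r / real ?M)"
    by (rule solve_product_eq[OF e']) (use assms in simp)
  moreover have q1: "real ?r = real n - real q" and q2: "real ?M = 2 * real n + 1 - real s"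
    using assms by auto
  ultimately have h: "real ((2 * n + 1 - Suc s) choose (n - Suc q)) = real (?M choose ?r) * ((real n - real q) / (2 * real n + 1 - real s))"
    unfolding M1 q1 q2 by simp
  show ?thesis unfolding binom_ratio_def h by simp
qed

lemma binom_ratio_limit: "q \<le> s \<Longrightarrow> binom_ratio s q \<longlonglongrightarrow> 1 / 2 ^ s"
proof (induction s arbitrary: q)
  case 0
  hence "binom_ratio 0 q = (\<lambda>n. 1)" using 0 by (auto simp: binom_ratio_def)
  thus ?case by simp
next
  case (Suc s)
  have half_1: "(\<lambda>n. (real n + 1 - real s) / (2 * real n + 1 - real s)) \<longlonglongrightarrow> 1 / 2" by real_asymp
  have half_2: "(\<lambda>n. (real n - real q') / (2 * real n + 1 - real s)) \<longlonglongrightarrow> 1 / 2" for q' by real_asymp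
  show ?case
  proof (cases q)
    case 0
    have "(\<lambda>n. binom_ratio s 0 n * ((real n + 1 - real s) / (2 * real n + 1 - real s))) \<longlonglongrightarrow> 1 / 2 ^ s * (1 / 2)"
      by (rule tendsto_mult[OF Suc.IH half_1]) simp
    moreover have "eventually (\<lambda>n. binom_ratio s 0 n * ((real n + 1 - real s) / (2 * real n + 1 - real s)) = binom_ratio (Suc s) q n) sequentially"
      using eventually_ge_at_top[of "s + 2"] by eventually_elim (simp add: binom_ratio_step_up 0)
    ultimately have "binom_ratio (Suc s) q \<longlonglongrightarrow> 1 / 2 ^ s * (1 / 2)" by (rule Lim_transform_eventually)
    thus ?thesis by (simp add: mult.commute)
  next
    case (Suc q')
    hence q': "q' \<le> s" using Suc.prems by simp
    have "(\<lambda>n. binom_ratio s q' n * ((real n - real q') / (2 * real n + 1 - real s))) \<longlonglongrightarrow> 1 / 2 ^ s * (1 / 2)"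
      by (rule tendsto_mult[OF Suc.IH[OF q'] half_2])
    moreover have "eventually (\<lambda>n. binom_ratio s q' n * ((real n - real q') / (2 * real n + 1 - real s)) = binom_ratio (Suc s) q n) sequentially"
      using eventually_ge_at_top[of "s + q' + 2"] by eventually_elim (simp add: binom_ratio_step Suc)
    ultimately have "binom_ratio (Suc s) q \<longlonglongrightarrow> 1 / 2 ^ s * (1 / 2)" by (rule Lim_transform_eventually)
    thus ?thesis by (simp add: mult.commute)
  qed
qed

section \<open>Concentration under uniform distributions\<close>

lemma mean_square_deviation:
  fixes f :: "'a \<Rightarrow> real"
  assumes "finite A" "A \<noteq> {}"
  shows "(\<Sum>x\<in>A. (f x - \<mu>)^2) / real (card A)
       = (\<Sum>x\<in>A. (f x)^2) / real (card A) - 2 * \<mu> * ((\<Sum>x\<in>A. f x) / real (card A)) + \<mu>^2"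
proof -
  have "(\<Sum>x\<in>A. (f x - \<mu>)^2) = (\<Sum>x\<in>A. (f x)^2 - 2 * \<mu> * f x + \<mu>^2)"
    by (simp add: power2_diff algebra_simps)
  also have "\<dots> = (\<Sum>x\<in>A. (f x)^2) - 2 * \<mu> * (\<Sum>x\<in>A. f x) + \<mu>^2 * real (card A)"
    by (simp add: sum.distrib sum_subtractf sum_distrib_left)
  finally have "(\<Sum>x\<in>A. (f x - \<mu>)^2) = (\<Sum>x\<in>A. (f x)^2) - 2 * \<mu> * (\<Sum>x\<in>A. f x) + \<mu>^2 * real (card A)" .
  moreover have "real (card A) \<noteq> 0" using assms by simp
  ultimately show ?thesis by (simp add: field_simps)
qed

lemma uniform_prob_mono:
  assumes "finite A" "\<And>x. x \<in> A \<Longrightarrow> P x \<Longrightarrow> Q x"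
  shows "uniform_prob A P \<le> uniform_prob A Q"
proof -
  have "card {x \<in> A. P x} \<le> card {x \<in> A. Q x}"
    using assms by (intro card_mono) auto
  thus ?thesis unfolding uniform_prob_def by (simp add: divide_right_mono)
qed

lemma uniform_chebyshev:
  fixes f :: "'a \<Rightarrow> real"
  assumes "finite A" "A \<noteq> {}" "0 < \<epsilon>"
  shows "1 - (\<Sum>x\<in>A. (f x - \<mu>)^2) / (real (card A) * \<epsilon>^2) \<le> uniform_prob A (\<lambda>x. \<bar>f x - \<mu>\<bar> \<le> \<epsilon>)"
proof -
  let ?B = "{x \<in> A. \<not> \<bar>f x - \<mu>\<bar> \<le> \<epsilon>}"
  have "real (card ?B) * \<epsilon>^2 = (\<Sum>x\<in>?B. \<epsilon>^2)" by simp
  also have "\<dots> \<le> (\<Sum>x\<in>?B. (f x - \<mu>)^2)"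
  proof (rule sum_mono)
    fix x assume "x \<in> ?B"
    hence "\<epsilon>^2 \<le> \<bar>f x - \<mu>\<bar>^2" using assms(3) by (intro power_mono) auto
    thus "\<epsilon>^2 \<le> (f x - \<mu>)^2" by simp
  qed
  also have "\<dots> \<le> (\<Sum>x\<in>A. (f x - \<mu>)^2)" using assms(1) by (intro sum_mono2) auto
  finally have bad: "real (card ?B) * \<epsilon>^2 \<le> (\<Sum>x\<in>A. (f x - \<mu>)^2)" .
  have "card {x \<in> A. \<bar>f x - \<mu>\<bar> \<le> \<epsilon>} + card ?B = card A"
    using assms(1) by (subst card_Un_disjoint[symmetric]) (auto intro: arg_cong[where f = card])
  hence "uniform_prob A (\<lambda>x. \<bar>f x - \<mu>\<bar> \<le> \<epsilon>) = 1 - real (card ?B) / real (card A)"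
    using assms(1,2) unfolding uniform_prob_def by (simp add: field_simps flip: of_nat_add)
  moreover have "real (card ?B) / real (card A) \<le> (\<Sum>x\<in>A. (f x - \<mu>)^2) / (real (card A) * \<epsilon>^2)"
    using divide_right_mono[OF bad, of "real (card A) * \<epsilon>^2"] assms(3) by simp
  ultimately show ?thesis by linarith
qed

lemma concentrated_second_moment:
  fixes X :: "nat \<Rightarrow> 'a \<Rightarrow> real"
  assumes nonempty: "\<And>n. finite (\<Omega> n) \<and> \<Omega> n \<noteq> {}"
    and mean: "(\<lambda>n. (\<Sum>t\<in>\<Omega> n. X n t) / real (card (\<Omega> n))) \<longlonglongrightarrow> \<mu>"
    and second: "\<forall>\<^sub>F n in sequentially. (\<Sum>t\<in>\<Omega> n. (X n t)^2) / real (card (\<Omega> n)) \<le> b n"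
    and b: "b \<longlonglongrightarrow> \<mu>^2"
  shows "concentrated \<Omega> X \<mu>"
  unfolding concentrated_def
proof (intro allI impI)
  fix \<epsilon> :: real assume \<epsilon>: "0 < \<epsilon>"
  let ?M1 = "\<lambda>n. (\<Sum>t\<in>\<Omega> n. X n t) / real (card (\<Omega> n))"
  let ?V = "\<lambda>n. (\<Sum>t\<in>\<Omega> n. (X n t - \<mu>)^2) / real (card (\<Omega> n))"
  have "(\<lambda>n. b n - 2 * \<mu> * ?M1 n + \<mu>^2) \<longlonglongrightarrow> \<mu>^2 - 2 * \<mu> * \<mu> + \<mu>^2"
    by (intro tendsto_intros b mean)
  hence "(\<lambda>n. b n - 2 * \<mu> * ?M1 n + \<mu>^2) \<longlonglongrightarrow> 0" by (simp add: power2_eq_square)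
  hence small: "\<forall>\<^sub>F n in sequentially. b n - 2 * \<mu> * ?M1 n + \<mu>^2 < \<epsilon> * \<epsilon>^2"
    using \<epsilon> by (intro order_tendstoD(2)) auto
  have "\<forall>\<^sub>F n in sequentially. ?V n < \<epsilon> * \<epsilon>^2"
    using second small
  proof eventually_elim
    case (elim n)
    thus ?case using mean_square_deviation[OF nonempty[of n, THEN conjunct1] nonempty[of n, THEN conjunct2],
        where f = "X n" and \<mu> = \<mu>] by linarith
  qed
  then obtain K where K: "\<And>n. n \<ge> K \<Longrightarrow> ?V n < \<epsilon> * \<epsilon>^2"
    unfolding eventually_sequentially by blast
  show "\<exists>K. \<forall>k\<ge>K. uniform_prob (\<Omega> k) (\<lambda>t. \<bar>X k t - \<mu>\<bar> \<le> \<epsilon>) > 1 - \<epsilon>"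
  proof (intro exI allI impI)
    fix k assume "K \<le> k"
    have "(\<Sum>t\<in>\<Omega> k. (X k t - \<mu>)^2) / (real (card (\<Omega> k)) * \<epsilon>^2) = ?V k / \<epsilon>^2"
      by simp
    also have "\<dots> < \<epsilon>" using K[OF \<open>K \<le> k\<close>] \<epsilon> by (subst pos_divide_less_eq) auto
    finally show "uniform_prob (\<Omega> k) (\<lambda>t. \<bar>X k t - \<mu>\<bar> \<le> \<epsilon>) > 1 - \<epsilon>"
      using uniform_chebyshev[of "\<Omega> k" \<epsilon> "X k" \<mu>] nonempty[of k] \<epsilon> by linarith
  qed
qed

lemma concentrated_Suc:
  assumes "concentrated (\<lambda>n. \<Omega> (Suc n)) (\<lambda>n. X (Suc n)) \<mu>"
  shows "concentrated \<Omega> X \<mu>"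
  unfolding concentrated_def
proof (intro allI impI)
  fix \<epsilon> :: real assume "0 < \<epsilon>"
  then obtain K where K: "\<And>n. n \<ge> K \<Longrightarrow> uniform_prob (\<Omega> (Suc n)) (\<lambda>t. \<bar>X (Suc n) t - \<mu>\<bar> \<le> \<epsilon>) > 1 - \<epsilon>"
    using assms unfolding concentrated_def by blast
  show "\<exists>K. \<forall>k\<ge>K. uniform_prob (\<Omega> k) (\<lambda>t. \<bar>X k t - \<mu>\<bar> \<le> \<epsilon>) > 1 - \<epsilon>"
  proof (intro exI allI impI)
    fix k assume "Suc K \<le> k"
    then obtain n where "k = Suc n" "n \<ge> K" by (metis Suc_le_D Suc_le_mono)
    thus "uniform_prob (\<Omega> k) (\<lambda>t. \<bar>X k t - \<mu>\<bar> \<le> \<epsilon>) > 1 - \<epsilon>" using K by simp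
  qed
qed

lemma concentrated_perturb:
  assumes Y: "concentrated \<Omega> Y \<mu>"
    and close: "\<forall>\<^sub>F k in sequentially. finite (\<Omega> k) \<and> (\<forall>t\<in>\<Omega> k. \<bar>X k t - Y k t\<bar> \<le> c k)"
    and c: "c \<longlonglongrightarrow> 0"
  shows "concentrated \<Omega> X \<mu>"
  unfolding concentrated_def
proof (intro allI impI)
  fix \<epsilon> :: real assume \<epsilon>: "0 < \<epsilon>"
  obtain K1 where K1: "\<And>k. k \<ge> K1 \<Longrightarrow> uniform_prob (\<Omega> k) (\<lambda>t. \<bar>Y k t - \<mu>\<bar> \<le> \<epsilon> / 2) > 1 - \<epsilon> / 2"
    using Y \<epsilon> unfolding concentrated_def by (meson half_gt_zero)
  have "\<forall>\<^sub>F k in sequentially. c k < \<epsilon> / 2" using c \<epsilon> by (intro order_tendstoD(2)) auto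
  with close have "\<forall>\<^sub>F k in sequentially.
      (finite (\<Omega> k) \<and> (\<forall>t\<in>\<Omega> k. \<bar>X k t - Y k t\<bar> \<le> c k)) \<and> c k < \<epsilon> / 2"
    by (rule eventually_conj)
  then obtain K2 where K2: "\<And>k. k \<ge> K2 \<Longrightarrow>
      (finite (\<Omega> k) \<and> (\<forall>t\<in>\<Omega> k. \<bar>X k t - Y k t\<bar> \<le> c k)) \<and> c k < \<epsilon> / 2"
    unfolding eventually_sequentially by blast
  show "\<exists>K. \<forall>k\<ge>K. uniform_prob (\<Omega> k) (\<lambda>t. \<bar>X k t - \<mu>\<bar> \<le> \<epsilon>) > 1 - \<epsilon>"
  proof (intro exI allI impI)
    fix k assume "max K1 K2 \<le> k"
    hence k1: "k \<ge> K1" and k2: "k \<ge> K2" by auto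
    have "uniform_prob (\<Omega> k) (\<lambda>t. \<bar>Y k t - \<mu>\<bar> \<le> \<epsilon> / 2) \<le> uniform_prob (\<Omega> k) (\<lambda>t. \<bar>X k t - \<mu>\<bar> \<le> \<epsilon>)"
    proof (rule uniform_prob_mono)
      fix t assume t: "t \<in> \<Omega> k" "\<bar>Y k t - \<mu>\<bar> \<le> \<epsilon> / 2"
      have "\<bar>X k t - Y k t\<bar> \<le> c k" "c k < \<epsilon> / 2" using K2[OF k2] t(1) by auto
      thus "\<bar>X k t - \<mu>\<bar> \<le> \<epsilon>" using t(2) by arith
    qed (use K2[OF k2] in blast)
    thus "uniform_prob (\<Omega> k) (\<lambda>t. \<bar>X k t - \<mu>\<bar> \<le> \<epsilon>) > 1 - \<epsilon>" using K1[OF k1] \<epsilon> by linarith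
  qed
qed

section \<open>Concentration of the pattern density\<close>

abbreviation cyclic_density :: "bool list \<Rightarrow> nat \<Rightarrow> ptree \<Rightarrow> real" where
  "cyclic_density P k t \<equiv> real (cyclic_count P (tree_walk t)) / real k"

lemma mean_cyclic_density:
  assumes "length P \<le> 2 * n + 1" "length (filter id P) \<le> n"
  shows "(\<Sum>t\<in>trees_of_size (Suc n). cyclic_density P (Suc n) t)
           / real (card (trees_of_size (Suc n)))
       = (2 * real n + 1) / (real n + 1) * binom_ratio (length P) (length (filter id P)) n"
proof -
  have sum: "(\<Sum>t\<in>trees_of_size (Suc n). cyclic_density P (Suc n) t)
      = real ((2 * n + 1 - length P) choose (n - length (filter id P))) / real (Suc n)"
    using sum_trees_cyclic_count[OF assms] by (simp flip: sum_divide_distrib)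
  have card: "real (card (trees_of_size (Suc n))) = real ((2 * n + 1) choose n) / (2 * real n + 1)"
    using card_trees[of n] by (simp add: field_simps)
  have "0 < real ((2 * n + 1) choose n)" by simp
  thus ?thesis unfolding sum card binom_ratio_def by (simp add: field_simps)
qed

lemma second_moment_cyclic_density:
  assumes "2 * length P \<le> 2 * n + 1" "2 * length (filter id P) \<le> n" "0 < length P"
  shows "(\<Sum>t\<in>trees_of_size (Suc n). (cyclic_density P (Suc n) t)^2)
           / real (card (trees_of_size (Suc n)))
       \<le> ((2 * real n + 1) / (real n + 1))^2 * binom_ratio (2 * length P) (2 * length (filter id P)) n
         + 2 * real (length P) * (2 * real n + 1) / (real n + 1)^2
           * binom_ratio (length P) (length (filter id P)) n"
proof -
  let ?C = "real ((2 * n + 1) choose n)"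
  have sum: "(\<Sum>t\<in>trees_of_size (Suc n). (cyclic_density P (Suc n) t)^2)
      = (\<Sum>t\<in>trees_of_size (Suc n). real (cyclic_count P (tree_walk t))^2) / (real n + 1)^2"
    by (simp add: sum_divide_distrib power_divide add.commute)
  have card: "real (card (trees_of_size (Suc n))) = ?C / (2 * real n + 1)"
    using card_trees[of n] by (simp add: field_simps)
  have pos: "0 < ?C / (2 * real n + 1)" by simp
  have "(\<Sum>t\<in>trees_of_size (Suc n). (cyclic_density P (Suc n) t)^2)
           / real (card (trees_of_size (Suc n)))
      \<le> ((2 * real n + 1) * real ((2 * n + 1 - 2 * length P) choose (n - 2 * length (filter id P)))
          + 2 * real (length P) * real ((2 * n + 1 - length P) choose (n - length (filter id P))))
          / (real n + 1)^2 / (?C / (2 * real n + 1))"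
    unfolding sum card using sum_trees_cyclic_count_sq[OF assms] pos
    by (intro divide_right_mono) (simp_all add: add.commute)
  also have "\<dots> = ((2 * real n + 1) / (real n + 1))^2 * binom_ratio (2 * length P) (2 * length (filter id P)) n
         + 2 * real (length P) * (2 * real n + 1) / (real n + 1)^2
           * binom_ratio (length P) (length (filter id P)) n"
  proof -
    have "(N * C2 + 2 * l * C1) / k^2 / (C / N) = (N / k)^2 * (C2 / C) + 2 * l * N / k^2 * (C1 / C)"
      if "0 < C" "0 < N" "0 < k" for N k C C1 C2 l :: real
      using that by (simp add: field_simps power2_eq_square)
    thus ?thesis unfolding binom_ratio_def by simp
  qed
  finally show ?thesis .
qed

lemma cyclic_density_concentrated:
  assumes "P \<noteq> []"
  shows "concentrated trees_of_size (cyclic_density P) (2 / 2 ^ length P)"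
proof (rule concentrated_Suc, rule concentrated_second_moment)
  let ?L = "length P" and ?a = "length (filter id P)"
  let ?r = "\<lambda>n::nat. (2 * real n + 1) / (real n + 1)"
  have r: "?r \<longlonglongrightarrow> 2" by real_asymp
  have aL: "?a \<le> ?L" by (rule length_filter_le)
  have R1: "binom_ratio ?L ?a \<longlonglongrightarrow> 1 / 2 ^ ?L" using aL by (rule binom_ratio_limit)
  have R2: "binom_ratio (2 * ?L) (2 * ?a) \<longlonglongrightarrow> 1 / 2 ^ (2 * ?L)" using aL by (intro binom_ratio_limit) simp
  have large: "\<forall>\<^sub>F n in sequentially. 2 * ?L \<le> 2 * n + 1 \<and> 2 * ?a \<le> n"
    using eventually_ge_at_top[of "2 * ?L + 2 * ?a"] by eventually_elim auto
  show "\<And>n. finite (trees_of_size (Suc n)) \<and> trees_of_size (Suc n) \<noteq> {}"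
    using tree_of_size_exists finite_trees by (auto simp: trees_of_size_def)
  have "(\<lambda>n. ?r n * binom_ratio ?L ?a n) \<longlonglongrightarrow> 2 * (1 / 2 ^ ?L)" by (intro tendsto_intros r R1)
  moreover have "\<forall>\<^sub>F n in sequentially. ?r n * binom_ratio ?L ?a n =
      (\<Sum>t\<in>trees_of_size (Suc n). cyclic_density P (Suc n) t)
        / real (card (trees_of_size (Suc n)))"
    using large
  proof eventually_elim
    case (elim n)
    hence "length P \<le> 2 * n + 1" "length (filter id P) \<le> n" by auto
    thus ?case by (rule mean_cyclic_density[symmetric])
  qed
  ultimately show "(\<lambda>n. (\<Sum>t\<in>trees_of_size (Suc n). cyclic_density P (Suc n) t)
        / real (card (trees_of_size (Suc n)))) \<longlonglongrightarrow> 2 / 2 ^ ?L"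
    by (simp add: Lim_transform_eventually)
  let ?b = "\<lambda>n. (?r n)^2 * binom_ratio (2 * ?L) (2 * ?a) n
      + 2 * real ?L * (2 * real n + 1) / (real n + 1)^2 * binom_ratio ?L ?a n"
  show "\<forall>\<^sub>F n in sequentially.
      (\<Sum>t\<in>trees_of_size (Suc n). (cyclic_density P (Suc n) t)^2)
        / real (card (trees_of_size (Suc n))) \<le> ?b n"
    using large
  proof eventually_elim
    case (elim n)
    thus ?case using second_moment_cyclic_density[of P n] assms by simp
  qed
  have "(\<lambda>n. 2 * real ?L * (2 * real n + 1) / (real n + 1)^2) \<longlonglongrightarrow> 0" by real_asymp
  hence "?b \<longlonglongrightarrow> 2^2 * (1 / 2 ^ (2 * ?L)) + 0 * (1 / 2 ^ ?L)"
    by (intro tendsto_intros r R1 R2)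
  thus "?b \<longlonglongrightarrow> (2 / 2 ^ ?L)^2"
    by (simp add: power_even_eq power_divide)
qed

lemma rho_close_to_cyclic_density:
  assumes "t \<in> trees_of_size k" "forest_verts F + 2 \<le> k"
  shows "\<bar>rho F k t - cyclic_density (forest_pattern F) k t\<bar> \<le> 1 / real k"
proof -
  have "length (dyck t) + 2 = 2 * k" using length_dyck[of t] assms(1) by (simp add: trees_of_size_def)
  hence "length (forest_pattern F) \<le> length (dyck t) + 1" using assms(2) by (simp add: length_forest_pattern)
  then obtain \<delta> where "\<delta> \<le> 1" "count_prefix F t = \<delta> + cyclic_count (forest_pattern F) (tree_walk t)"
    using count_prefix_cyclic_count by blast
  thus ?thesis unfolding rho_def by (simp add: add_divide_distrib divide_right_mono)
qed

text \<open>The theorem: the pattern of F has length 2m+2, and rho differs from its cyclic density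
  by at most 1/k.\<close>
theorem proposition7:
  fixes F :: pforest
  shows "concentrated trees_of_size (rho F) (1 / 2 ^ (2 * forest_verts F + 1))"
proof (rule concentrated_perturb)
  let ?P = "forest_pattern F"
  have "2 / 2 ^ length ?P = (1 / 2 ^ (2 * forest_verts F + 1) :: real)"
    by (simp add: length_forest_pattern)
  moreover have "?P \<noteq> []" by (simp add: forest_pattern_def)
  ultimately show "concentrated trees_of_size (cyclic_density ?P)
      (1 / 2 ^ (2 * forest_verts F + 1))"
    using cyclic_density_concentrated by metis
  show "\<forall>\<^sub>F k in sequentially. finite (trees_of_size k) \<and> (\<forall>t\<in>trees_of_size k.
      \<bar>rho F k t - cyclic_density ?P k t\<bar> \<le> 1 / real k)"
    using eventually_ge_at_top[of "forest_verts F + 2"]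
    by eventually_elim (simp add: finite_trees rho_close_to_cyclic_density)
  show "(\<lambda>k. 1 / real k) \<longlonglongrightarrow> 0" by real_asymp
qed

end
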